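(* Let $m\ge 2$ and $\alpha\in[0,1]$. Every deterministic voting rule $f$ that takes ranked preferences with intensities as input satisfies, under mandatory elicitation of the intensities, $\mathsf{dist}_\alpha(f)\ge 1+2\alpha$.
   Context: An election $\mathcal E=(N,A,\vec\sigma)$ has a finite set $N$ of $n$ agents, a set $A$ of $m$ alternatives, and a profile $\vec\sigma=(\sigma_1,\dots,\sigma_n)$. Each $\sigma_i=(\pi_i,\Join_i)$ consists of a bijection $\pi_i:[m]\to A$, where $\pi_i(1)$ is agent $i$'s most preferred alternative, and a map $\Join_i:[m-1]\to\{\succ,\succ\!\!\succ\}$ recording strong ($\succ\!\!\succ$) or ordinary ($\succ$) preference between consecutive alternatives. A metric $d$ on $N\cup A$ is nonnegative and symmetric, satisfies the triangle inequality, and has $d(x,x)=0$. For $\alpha\in[0,1]$, the profile $\vec\sigma$ is $\alpha$-consistent with $d$ under mandatory elicitation if for every agent $i$ and every $j\in[m-1]$: - if $\Join_i(j)=\,\succ$, then $d(i,\pi_i(j+1))\ge d(i,\pi_i(j))>\alpha\, d(i,\pi_i(j+1))$; - if $\Join_i(j)=\,\succ\!\!\succ$, then $d(i,\pi_i(j))\le \alpha\, d(i,\pi_i(j+1))$. Let $\mathrm{sc}_d(a)=\sum_{i\in N}d(i,a)$. Define $\mathsf{dist}_\alpha(a,\mathcal E)=\sup_d \mathrm{sc}_d(a)/\min_{b\in A}\mathrm{sc}_d(b)$ over such $\alpha$-consistent metrics $d$. For a deterministic voting rule $f$, $\mathsf{dist}_\alpha(f)=\sup_{\mathcal E}\mathsf{dist}_\alpha(f(\vec\sigma),\mathcal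 E)$ over all elections with $m$ alternatives. *)

theory Defs
  imports Complex_Main "HOL-Library.Extended_Real"
begin

text \<open>Alternatives are 0..<m, agents are 0..<n (n = length of the profile).
 A ballot is (pi, J): pi lists the alternatives from most to least preferred,
 J ! j = True means a strong preference between pi!j and pi!(j+1) (0-indexed),
 J ! j = False an ordinary one.\<close>

type_synonym ballot = "nat list \<times> bool list"

definition valid_ballot :: "nat \<Rightarrow> ballot \<Rightarrow> bool" where
  "valid_ballot m b \<longleftrightarrow> distinct (fst b) \<and> set (fst b) = {0..<m} \<and> length (snd b) = m - 1"

definition valid_profile :: "nat \<Rightarrow> ballot list \<Rightarrow> bool" where
  "valid_profile m P \<longleftrightarrow> (\<forall>b\<in>set P. valid_ballot m b)"

text \<open>Points of N \<union> A: Inl i is agent i, Inr a is alternative a.\<close>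
definition is_metric :: "nat \<Rightarrow> nat \<Rightarrow> (nat + nat \<Rightarrow> nat + nat \<Rightarrow> real) \<Rightarrow> bool" where
  "is_metric n m d \<longleftrightarrow>
     (let X = Inl ` {0..<n} \<union> Inr ` {0..<m} in
      \<forall>x\<in>X. \<forall>y\<in>X. 0 \<le> d x y \<and> d x y = d y x \<and> d x x = 0 \<and>
                   (\<forall>z\<in>X. d x z \<le> d x y + d y z))"

definition consistent :: "real \<Rightarrow> nat \<Rightarrow> ballot list \<Rightarrow> (nat + nat \<Rightarrow> nat + nat \<Rightarrow> real) \<Rightarrow> bool" where
  "consistent \<alpha> m P d \<longleftrightarrow>
     (\<forall>i<length P. \<forall>j<m - 1.
        (let pi = fst (P ! i); J = snd (P ! i);
             x = d (Inl i) (Inr (pi ! j)); y = d (Inl i) (Inr (pi ! (j + 1)))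
         in if J ! j then x \<le> \<alpha> * y else (x \<le> y \<and> \<alpha> * y < x)))"

definition sc :: "(nat + nat \<Rightarrow> nat + nat \<Rightarrow> real) \<Rightarrow> nat \<Rightarrow> nat \<Rightarrow> real" where
  "sc d n a = (\<Sum>i<n. d (Inl i) (Inr a))"

definition opt_sc :: "(nat + nat \<Rightarrow> nat + nat \<Rightarrow> real) \<Rightarrow> nat \<Rightarrow> nat \<Rightarrow> real" where
  "opt_sc d n m = Min ((sc d n) ` {0..<m})"

definition dist_alt :: "real \<Rightarrow> nat \<Rightarrow> ballot list \<Rightarrow> nat \<Rightarrow> ereal" where
  "dist_alt \<alpha> m P a =
     Sup {ereal (sc d (length P) a / opt_sc d (length P) m) | d.
            is_metric (length P) m d \<and> consistent \<alpha> m P d \<and> opt_sc d (length P) m > 0}"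

definition dist_rule :: "real \<Rightarrow> nat \<Rightarrow> (ballot list \<Rightarrow> nat) \<Rightarrow> ereal" where
  "dist_rule \<alpha> m f = (SUP P\<in>{P. valid_profile m P}. dist_alt \<alpha> m P (f P))"

end

theory Submission
  imports Defs "HOL-Combinatorics.Permutations"
begin

text \<open>Two agents report 0 \<succ>\<succ> 1 \<succ> 2 \<dots> and 1 \<succ>\<succ> 0 \<succ> 2 \<dots>. Let z \<in> {0, 1} be the
 winner if it is 0 or 1 (else z = 0). Embed everything in the plane with the L1 metric so that
 the agent ranking z first is at distance \<alpha> from z and 1 from the other top alternative,
 while the other agent sits on its favourite, at distance 1 + \<alpha> from z. Then z has social
 cost 1 + 2\<alpha>, the other top alternative cost 1, and all remaining alternatives are placed at
 a common distance R \<ge> 1 + \<alpha> from both agents. R = (1 + \<alpha>)/\<alpha> makes the second gap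
 strong for \<alpha> > 1/2, R = 1 + \<alpha> makes it ordinary for \<alpha> \<le> 1/2; all later gaps
 compare R with R and are strong exactly when \<alpha> = 1.\<close>

definition l1_dist :: "real \<times> real \<Rightarrow> real \<times> real \<Rightarrow> real" where
  "l1_dist u v = \<bar>fst u - fst v\<bar> + \<bar>snd u - snd v\<bar>"

lemma is_metric_l1_embedding: "is_metric n m (\<lambda>x y. l1_dist (p x) (p y))"
  unfolding is_metric_def l1_dist_def Let_def by (auto simp: abs_minus_commute)

lemma valid_ballot_permutes:
  assumes "\<sigma> permutes {0..<m}" and "length J = m - 1"
  shows "valid_ballot m (map \<sigma> [0..<m], J)"
  using assms permutes_inj_on[OF assms(1)] permutes_image[OF assms(1)]
  by (simp add: valid_ballot_def distinct_map)

lemma dist_rule_ge_witness: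
  assumes "valid_profile m P" and "is_metric (length P) m d" and "consistent \<alpha> m P d"
    and "opt_sc d (length P) m > 0"
  shows "ereal (sc d (length P) (f P) / opt_sc d (length P) m) \<le> dist_rule \<alpha> m f"
proof -
  have "ereal (sc d (length P) (f P) / opt_sc d (length P) m) \<le> dist_alt \<alpha> m P (f P)"
    unfolding dist_alt_def using assms(2-4) by (intro Sup_upper) blast
  also have "\<dots> \<le> dist_rule \<alpha> m f"
    unfolding dist_rule_def using assms(1) by (intro SUP_upper) auto
  finally show ?thesis .
qed

definition remote_dist :: "real \<Rightarrow> real" where
  "remote_dist \<alpha> = (if 1/2 < \<alpha> then (1 + \<alpha>) / \<alpha> else 1 + \<alpha>)"

lemma remote_dist_ge:
  assumes "0 \<le> \<alpha>" and "\<alpha> \<le> 1"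
  shows "1 + \<alpha> \<le> remote_dist \<alpha>"
  using assms mult_le_one[of \<alpha> \<alpha>] by (auto simp: remote_dist_def field_simps)

lemma remote_dist_strong: "1/2 < \<alpha> \<Longrightarrow> \<alpha> * remote_dist \<alpha> = 1 + \<alpha>"
  by (simp add: remote_dist_def)

lemma remote_dist_ordinary:
  assumes "0 \<le> \<alpha>" and "\<alpha> \<le> 1/2"
  shows "\<alpha> * remote_dist \<alpha> < 1"
proof -
  have "\<alpha> * \<alpha> \<le> 1/2 * (1/2)" using assms by (intro mult_mono) auto
  then show ?thesis using assms by (simp add: remote_dist_def algebra_simps)
qed

definition intensities :: "real \<Rightarrow> nat \<Rightarrow> bool list" where
  "intensities \<alpha> m = map (\<lambda>j. j = 0 \<or> (j = 1 \<and> 1/2 < \<alpha>) \<or> \<alpha> = 1) [0..<m - 1]"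

definition adversary_profile :: "real \<Rightarrow> nat \<Rightarrow> ballot list" where
  "adversary_profile \<alpha> m =
     [([0..<m], intensities \<alpha> m), (map (transpose 0 1) [0..<m], intensities \<alpha> m)]"

lemma valid_adversary_profile:
  assumes "m \<ge> 2"
  shows "valid_profile m (adversary_profile \<alpha> m)"
proof -
  have J: "length (intensities \<alpha> m) = m - 1"
    by (simp add: intensities_def)
  have "transpose 0 1 permutes {0..<m}"
    using assms by (intro permutes_swap_id) auto
  have "valid_ballot m (map id [0..<m], intensities \<alpha> m)"
    by (rule valid_ballot_permutes[OF permutes_id J])
  moreover have "valid_ballot m (map (transpose 0 1) [0..<m], intensities \<alpha> m)"
    by (rule valid_ballot_permutes[OF \<open>transpose 0 1 permutes {0..<m}\<close> J])
  ultimately show ?thesis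
    by (simp add: valid_profile_def adversary_profile_def)
qed

definition adversary_position :: "real \<Rightarrow> nat \<Rightarrow> nat + nat \<Rightarrow> real \<times> real" where
  "adversary_position \<alpha> z x = (case x of
       Inl i \<Rightarrow> (if i = z then \<alpha> else 1 + \<alpha>, 0)
     | Inr k \<Rightarrow> if k = z then (0, 0) else if k < 2 then (1 + \<alpha>, 0)
               else (1/2 + \<alpha>, remote_dist \<alpha> - 1/2))"

definition adversary_metric :: "real \<Rightarrow> nat \<Rightarrow> nat + nat \<Rightarrow> nat + nat \<Rightarrow> real" where
  "adversary_metric \<alpha> z x y = l1_dist (adversary_position \<alpha> z x) (adversary_position \<alpha> z y)"

lemma adversary_metric_agent_alt:
  assumes "0 \<le> \<alpha>" and "\<alpha> \<le> 1" and "z < 2" and "i < 2"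
  shows "adversary_metric \<alpha> z (Inl i) (Inr k) =
    (if 2 \<le> k then remote_dist \<alpha>
     else if i = z then (if k = z then \<alpha> else 1)
     else (if k = z then 1 + \<alpha> else 0))"
  using assms remote_dist_ge[OF assms(1,2)]
  by (auto simp: adversary_metric_def adversary_position_def l1_dist_def less_2_cases_iff)

lemma adversary_profile_rank:
  assumes "i < 2" and "k < m"
  shows "fst (adversary_profile \<alpha> m ! i) ! k = (if i = 0 then k else transpose 0 1 k)"
  using assms by (auto simp: adversary_profile_def less_2_cases_iff)

lemma adversary_metric_by_rank:
  assumes "0 \<le> \<alpha>" and "\<alpha> \<le> 1" and "z < 2" and "i < 2" and "k < m"
  shows "adversary_metric \<alpha> z (Inl i) (Inr (fst (adversary_profile \<alpha> m ! i) ! k)) =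
    (if 2 \<le> k then remote_dist \<alpha>
     else if k = 0 then (if i = z then \<alpha> else 0)
     else (if i = z then 1 else 1 + \<alpha>))"
proof -
  consider "k = 0" | "k = 1" | "2 \<le> k" by linarith
  then show ?thesis
    using assms(3,4)
    unfolding adversary_profile_rank[OF assms(4,5)] adversary_metric_agent_alt[OF assms(1-4)]
    by cases (auto simp: less_2_cases_iff)
qed

lemma adversary_metric_consistent:
  assumes "0 \<le> \<alpha>" and "\<alpha> \<le> 1" and "z < 2"
  shows "consistent \<alpha> m (adversary_profile \<alpha> m) (adversary_metric \<alpha> z)"
  unfolding consistent_def Let_def
proof (intro allI impI)
  fix i j
  assume "i < length (adversary_profile \<alpha> m)" and j: "j < m - 1"
  then have i: "i < 2" by (simp add: adversary_profile_def)
  let ?d = "\<lambda>k. adversary_metric \<alpha> z (Inl i) (Inr (fst (adversary_profile \<alpha> m ! i) ! k))"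
  let ?R = "remote_dist \<alpha>"
  have strong: "snd (adversary_profile \<alpha> m ! i) ! k \<longleftrightarrow> k = 0 \<or> (k = 1 \<and> 1/2 < \<alpha>) \<or> \<alpha> = 1"
    if "k < m - 1" for k
    using i that by (auto simp: adversary_profile_def intensities_def less_2_cases_iff)
  have d: "?d k = (if 2 \<le> k then ?R else if k = 0 then (if i = z then \<alpha> else 0)
                   else (if i = z then 1 else 1 + \<alpha>))" if "k \<le> j + 1" for k
    using adversary_metric_by_rank[OF assms i] that j by simp
  have R: "1 + \<alpha> \<le> ?R" using remote_dist_ge[OF assms(1,2)] .
  consider "j = 0" | "j = 1" | "2 \<le> j" by linarith
  then show "if snd (adversary_profile \<alpha> m ! i) ! j then ?d j \<le> \<alpha> * ?d (j + 1)
             else ?d j \<le> ?d (j + 1) \<and> \<alpha> * ?d (j + 1) < ?d j"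
  proof cases
    case 1
    then show ?thesis using j assms(1) by (simp add: strong d)
  next
    case 2
    show ?thesis
    proof (cases "1/2 < \<alpha>")
      case True
      then show ?thesis using 2 j assms(1) by (simp add: strong d remote_dist_strong)
    next
      case False
      then have "\<alpha> * ?R < 1" using remote_dist_ordinary assms(1) by simp
      then show ?thesis using 2 j False R assms(1) by (simp add: strong d)
    qed
  next
    case 3
    have "0 < ?R" using R assms(1) by linarith
    then have "\<alpha> \<noteq> 1 \<Longrightarrow> \<alpha> * ?R < ?R" using assms(2) by simp
    moreover have "?d j = ?R" and "?d (j + 1) = ?R" using 3 by (simp_all add: d)
    ultimately show ?thesis using 3 j strong[OF j] by auto
  qed
qed

lemma sc_adversary_metric:
  assumes "0 \<le> \<alpha>" and "\<alpha> \<le> 1" and "z < 2"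
  shows "sc (adversary_metric \<alpha> z) 2 k =
    (if 2 \<le> k then 2 * remote_dist \<alpha> else if k = z then 1 + 2 * \<alpha> else 1)"
proof -
  have "sc (adversary_metric \<alpha> z) 2 k =
      adversary_metric \<alpha> z (Inl 0) (Inr k) + adversary_metric \<alpha> z (Inl 1) (Inr k)"
    by (simp add: sc_def numeral_2_eq_2)
  then show ?thesis
    using assms by (auto simp: adversary_metric_agent_alt less_2_cases_iff)
qed

lemma opt_sc_adversary_metric:
  assumes "0 \<le> \<alpha>" and "\<alpha> \<le> 1" and "z < 2" and "m \<ge> 2"
  shows "opt_sc (adversary_metric \<alpha> z) 2 m = 1"
  unfolding opt_sc_def
proof (rule Min_eqI)
  show "finite (sc (adversary_metric \<alpha> z) 2 ` {0..<m})" by simp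
  show "1 \<le> c" if "c \<in> sc (adversary_metric \<alpha> z) 2 ` {0..<m}" for c
    using that assms remote_dist_ge[OF assms(1,2)] by (auto simp: sc_adversary_metric)
  have "sc (adversary_metric \<alpha> z) 2 (1 - z) = 1"
    using assms by (auto simp: sc_adversary_metric less_2_cases_iff)
  moreover have "1 - z \<in> {0..<m}" using assms(4) by simp
  ultimately show "1 \<in> sc (adversary_metric \<alpha> z) 2 ` {0..<m}" by (metis image_eqI)
qed

theorem lemma2:
  fixes m :: nat and \<alpha> :: real and f :: "ballot list \<Rightarrow> nat"
  assumes "m \<ge> 2" and "0 \<le> \<alpha>" and "\<alpha> \<le> 1"
    and "\<And>P. valid_profile m P \<Longrightarrow> f P < m"
  shows "dist_rule \<alpha> m f \<ge> ereal (1 + 2 * \<alpha>)"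
proof -
  let ?P = "adversary_profile \<alpha> m"
  define z :: nat where "z = (if f ?P = 1 then 1 else 0)"
  let ?d = "adversary_metric \<alpha> z"
  have valid: "valid_profile m ?P" using assms(1) by (rule valid_adversary_profile)
  have z: "z < 2" by (simp add: z_def)
  have two_agents: "length ?P = 2" by (simp add: adversary_profile_def)
  have opt: "opt_sc ?d 2 m = 1" using opt_sc_adversary_metric assms(1-3) z by blast
  have "1 + 2 * \<alpha> \<le> sc ?d 2 (f ?P)"
    using assms(2,3) remote_dist_ge[OF assms(2,3)] z
    by (auto simp: sc_adversary_metric z_def)
  also have "ereal (sc ?d 2 (f ?P)) \<le> dist_rule \<alpha> m f"
    using dist_rule_ge_witness[OF valid, of ?d \<alpha> f] two_agents opt
      is_metric_l1_embedding[of 2 m "adversary_position \<alpha> z"]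
      adversary_metric_consistent[OF assms(2,3) z, of m]
    by (simp add: adversary_metric_def[abs_def])
  finally show ?thesis by simp
qed

end
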